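(* Let $q \in Q$ and suppose $R_q$ consists of a single simple path. Then the polytope $\bar{P}(\mathcal{C}_q) = \{ (x,y) \in [0,1]^{|N|+1} : \sum_{j \in S} x_j \ge y \ \forall S \in \mathcal{C}_q\}$ is integral, i.e., all its vertices are integral.
   Context: Let $G=(N,A)$ be a finite undirected graph with edge lengths $\ell_e > 0$, and let $d>0$ be the travel range, with $\ell_e \le d$ for every edge. A path is a sequence $r=(v_0,v_1,\dots,v_m)$, $m\ge 1$, of nodes in which consecutive nodes are joined by an edge (nodes may repeat); $r$ is simple if its nodes are distinct. For $x \in \{0,1\}^N$ ($x_j = 1$ meaning a charging station at node $j$), path $r$ is repeatedly traversable under $x$ if, letting $W=(v_0,\dots,v_m,v_{m-1},\dots,v_0)$ be the round trip along $r$ (same path out and back), at least one node of $r$ has $x_j=1$ and, in the infinite periodic repetition of $W$, the distance travelled between any two consecutive visits to nodes with a station is at most $d$. Let $Q$ be a finite set of demands; each $q\in Q$ has a finite nonempty set $R_q$ of paths. For each $q \in Q$ and $r \in R_q$, $\mathcal{D}_{q,r}\subseteq 2^N$ is a family of node sets such that for every $x \in \{0,1\}^N$: $r$ is repeatedly traversable under $x$ if and only if $\sum_{j\in S} x_j \ge 1$ for all $S \in \mathcal{D}_{q,r}$. Define $\mathcal{C}_q = \{ \bigcup_{r \in R_q} S_r : S_r \in \mathcal{D}_{q,r} \text{ for each } r \in R_q\}$. *)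

theory Defs
  imports "HOL-Analysis.Analysis"
begin

text \<open>Nodes are the elements of a finite type 'n (so N = UNIV); edges A are
  2-element node sets; lengths are given by a function on edges.\<close>

definition is_graph :: "'n set set \<Rightarrow> bool" where
  "is_graph A \<longleftrightarrow> (\<forall>e\<in>A. card e = 2)"

definition is_path :: "'n set set \<Rightarrow> 'n list \<Rightarrow> bool" where
  "is_path A r \<longleftrightarrow> length r \<ge> 2 \<and>
     (\<forall>i. Suc i < length r \<longrightarrow> {r ! i, r ! Suc i} \<in> A)"

definition is_simple_path :: "'n set set \<Rightarrow> 'n list \<Rightarrow> bool" where
  "is_simple_path A r \<longleftrightarrow> is_path A r \<and> distinct r"

definition round_trip :: "'n list \<Rightarrow> 'n list" where
  "round_trip r = r @ tl (rev r)"

definition rep_walk :: "'n list \<Rightarrow> nat \<Rightarrow> 'n" where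
  "rep_walk r k = round_trip r ! (k mod length (round_trip r))"

text \<open>Distance travelled in step k of the repeated walk (from position k to k+1).
  At the junction of two copies of W the node v0 is repeated, no edge is travelled
  and the distance is 0.\<close>
definition step_len :: "('n set \<Rightarrow> real) \<Rightarrow> 'n list \<Rightarrow> nat \<Rightarrow> real" where
  "step_len len r k = (if rep_walk r k = rep_walk r (Suc k) then 0
                     else len {rep_walk r k, rep_walk r (Suc k)})"

text \<open>Repeated traversability of path r under station set X (x_j = 1 iff j \<in> X).\<close>
definition rep_traversable ::
    "('n set \<Rightarrow> real) \<Rightarrow> real \<Rightarrow> 'n list \<Rightarrow> 'n set \<Rightarrow> bool" where
  "rep_traversable len d r X \<longleftrightarrow>
     (\<exists>j\<in>set r. j \<in> X) \<and>
     (\<forall>i j. i < j \<and> rep_walk r i \<in> X \<and> rep_walk r j \<in> X \<and>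
            (\<forall>k. i < k \<and> k < j \<longrightarrow> rep_walk r k \<notin> X)
        \<longrightarrow> (\<Sum>k=i..<j. step_len len r k) \<le> d)"

definition C_fam :: "'n list set \<Rightarrow> ('n list \<Rightarrow> 'n set set) \<Rightarrow> 'n set set" where
  "C_fam R D = {\<Union>r\<in>R. S r | S. \<forall>r\<in>R. S r \<in> D r}"

definition Pbar :: "'n::finite set set \<Rightarrow> ((real^'n) \<times> real) set" where
  "Pbar C = {(x, y). (\<forall>j. 0 \<le> x $ j \<and> x $ j \<le> 1) \<and> 0 \<le> y \<and> y \<le> 1 \<and>
                      (\<forall>S\<in>C. (\<Sum>j\<in>S. x $ j) \<ge> y)}"

definition integral_polytope :: "((real^'n::finite) \<times> real) set \<Rightarrow> bool" where
  "integral_polytope P \<longleftrightarrow>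
     (\<forall>v. v extreme_point_of P \<longrightarrow> (\<forall>j. fst v $ j \<in> \<int>) \<and> snd v \<in> \<int>)"

end

theory Submission
  imports Defs
begin

text \<open>
  At a vertex of Pbar(C) the last coordinate y is 0 or 1: for 0 < y < 1 the point lies strictly
  between (min(1, x/y), 1) and a point with y = 0. For a single simple path r, every S in D(r)
  contains a segment I of consecutive nodes of r that still contains a member of D(r), i.e. such
  that the stations outside I do not make r traversable: the nodes visited between two
  consecutive stations that are too far apart. Hence Pbar(C) is also cut out by sums over
  segments of one ordering of the nodes, a consecutive-ones system, and for such systems a
  vertex with integral y has integral x.
\<close>

lemma not_extreme_point_of_plus_minus:
  fixes v w :: "'a::real_vector"
  assumes "v - w \<in> S" "v + w \<in> S" "w \<noteq> 0"
  shows "\<not> v extreme_point_of S"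
proof -
  have "v = midpoint (v - w) (v + w)"
    by (simp add: midpoint_def scaleR_2 flip: scaleR_right_distrib)
  moreover have "v - w \<noteq> v + w"
    using \<open>w \<noteq> 0\<close> by (simp add: eq_neg_iff_add_eq_0 algebra_simps flip: scaleR_2)
  ultimately have "v \<in> open_segment (v - w) (v + w)"
    by (metis midpoint_in_open_segment)
  then show ?thesis
    using assms by (auto simp: extreme_point_of_def)
qed

lemma Pbar_subset_Pbar:
  assumes "\<forall>S'\<in>C'. \<exists>S\<in>C. S \<subseteq> S'"
  shows "Pbar C \<subseteq> Pbar C'"
proof clarify
  fix x y assume xy: "(x, y) \<in> Pbar C"
  have "y \<le> (\<Sum>j\<in>S'. x $ j)" if "S' \<in> C'" for S'
  proof -
    obtain S where "S \<in> C" "S \<subseteq> S'"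
      using assms \<open>S' \<in> C'\<close> by blast
    then have "y \<le> (\<Sum>j\<in>S. x $ j)"
      using xy by (auto simp: Pbar_def)
    also have "\<dots> \<le> (\<Sum>j\<in>S'. x $ j)"
      using xy \<open>S \<subseteq> S'\<close> by (intro sum_mono2) (auto simp: Pbar_def)
    finally show ?thesis .
  qed
  with xy show "(x, y) \<in> Pbar C'"
    by (auto simp: Pbar_def)
qed

lemma Pbar_snd_0_iff: "(x, 0) \<in> Pbar C \<longleftrightarrow> (\<forall>j. 0 \<le> x $ j \<and> x $ j \<le> 1)"
  by (auto simp: Pbar_def intro: sum_nonneg)

lemma Pbar_scale_to_snd_1:
  assumes "(x, y) \<in> Pbar C" "0 < y"
  shows "(\<chi> j. min 1 (x $ j / y), 1) \<in> Pbar C"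
proof -
  let ?x' = "\<chi> j. min 1 (x $ j / y)"
  have "1 \<le> (\<Sum>j\<in>S. ?x' $ j)" if "S \<in> C" for S
  proof (cases "\<exists>j\<in>S. y \<le> x $ j")
    case True
    then obtain j where "j \<in> S" "y \<le> x $ j" by blast
    then have "1 = ?x' $ j"
      using \<open>0 < y\<close> by simp
    also have "\<dots> \<le> (\<Sum>j\<in>S. ?x' $ j)"
      using assms \<open>j \<in> S\<close> by (intro member_le_sum) (auto simp: Pbar_def)
    finally show ?thesis .
  next
    case False
    then have "\<forall>j\<in>S. ?x' $ j = x $ j / y"
      using \<open>0 < y\<close> by auto
    then have "(\<Sum>j\<in>S. ?x' $ j) = (\<Sum>j\<in>S. x $ j) / y"
      by (simp add: sum_divide_distrib)
    then show ?thesis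
      using assms \<open>S \<in> C\<close> by (simp add: Pbar_def)
  qed
  with assms show ?thesis
    by (auto simp: Pbar_def)
qed

lemma extreme_point_of_Pbar_snd:
  assumes "v extreme_point_of Pbar C"
  shows "snd v = 0 \<or> snd v = 1"
proof (rule ccontr)
  obtain x y where v: "v = (x, y)" by (cases v)
  assume "\<not> (snd v = 0 \<or> snd v = 1)"
  moreover have xy: "(x, y) \<in> Pbar C"
    using assms v by (simp add: extreme_point_of_def)
  ultimately have y: "0 < y" "y < 1"
    using v by (auto simp: Pbar_def)
  define x' where "x' = (\<chi> j. min 1 (x $ j / y))"
  define x'' where "x'' = (\<chi> j. (x $ j - y * x' $ j) / (1 - y))"
  have "(x', 1) \<in> Pbar C"
    unfolding x'_def using xy y(1) by (rule Pbar_scale_to_snd_1)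
  moreover have "(x'', 0) \<in> Pbar C"
    unfolding Pbar_snd_0_iff
  proof
    fix j
    have "0 \<le> x $ j" "x $ j \<le> 1"
      using xy by (auto simp: Pbar_def)
    with y show "0 \<le> x'' $ j \<and> x'' $ j \<le> 1"
      by (cases "y \<le> x $ j") (auto simp: x''_def x'_def field_simps)
  qed
  moreover have "(x, y) = (1 - y) *\<^sub>R (x'', 0) + y *\<^sub>R (x', 1)"
    using y by (simp add: x''_def vec_eq_iff)
  then have "(x, y) \<in> open_segment (x'', 0) (x', 1)"
    unfolding in_segment using y by (intro conjI exI[of _ y]) auto
  ultimately show False
    using assms v by (auto simp: extreme_point_of_def)
qed

lemma frac_eq_iff_diff_Ints: "frac (a::real) = frac b \<longleftrightarrow> a - b \<in> \<int>"
  by (metis frac_diff_eq frac_diff_zero frac_eq_0_iff)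

definition dist_to_Ints :: "real \<Rightarrow> real" where
  "dist_to_Ints t = min (frac t) (1 - frac t)"

lemma dist_to_Ints_pos: "t \<notin> \<int> \<Longrightarrow> 0 < dist_to_Ints t"
  by (simp add: dist_to_Ints_def frac_lt_1)

lemma dist_to_Ints_nonneg: "0 \<le> dist_to_Ints t"
  using frac_lt_1[of t] by (simp add: dist_to_Ints_def)

lemma dist_to_Ints_uminus: "dist_to_Ints (- t) = dist_to_Ints t"
proof (cases "t \<in> \<int>")
  case True
  then have "frac t = 0" "frac (- t) = 0" by simp_all
  then show ?thesis unfolding dist_to_Ints_def by (simp only:)
qed (simp add: dist_to_Ints_def frac_neg min.commute)

lemma Ints_lower_bound_dist_to_Ints:
  assumes "m \<in> \<int>" "m \<le> t"
  shows "m + dist_to_Ints t \<le> t"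
proof -
  from \<open>m \<in> \<int>\<close> obtain k where m: "m = of_int k"
    by (elim Ints_cases)
  with \<open>m \<le> t\<close> have "m \<le> of_int \<lfloor>t\<rfloor>"
    by (simp add: le_floor_iff)
  then show ?thesis
    by (simp add: dist_to_Ints_def frac_def)
qed

lemma Ints_upper_bound_dist_to_Ints:
  assumes "m \<in> \<int>" "t \<le> m"
  shows "t + dist_to_Ints t \<le> m"
  using Ints_lower_bound_dist_to_Ints[of "- m" "- t"] assms
  by (simp add: dist_to_Ints_uminus)

lemma obtain_uniform_dist_to_Ints:
  assumes "finite T"
  obtains eps where "0 < eps" "\<And>t. t \<in> T \<Longrightarrow> t \<notin> \<int> \<Longrightarrow> eps \<le> dist_to_Ints t"
proof
  let ?eps = "Min (insert 1 (dist_to_Ints ` (T - \<int>)))"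
  show "0 < ?eps"
    using assms by (subst Min_gr_iff) (auto intro: dist_to_Ints_pos)
  show "?eps \<le> dist_to_Ints t" if "t \<in> T" "t \<notin> \<int>" for t
    using assms that by (intro Min_le) auto
qed

text \<open>Raise by \<open>\<epsilon>\<close> exactly those z k whose fractional part is that of z b0. Then every
  difference z b - z a either keeps its value or is non-integral, and \<open>\<epsilon>\<close> is chosen
  below its distance to the integers.\<close>
lemma level_set_perturbation:
  fixes z :: "nat \<Rightarrow> real"
  assumes "z b0 - z a0 \<notin> \<int>"
  obtains h where "h b0 \<noteq> h a0"
    and "\<And>a b. a \<le> n \<Longrightarrow> b \<le> n \<Longrightarrow> \<bar>h b - h a\<bar> \<le> dist_to_Ints (z b - z a)"
proof -
  define g where "g k = (if frac (z k) = frac (z b0) then 1 else 0 :: real)" for k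
  have g_diff: "z b - z a \<notin> \<int>" if "g b \<noteq> g a" for a b
    using that unfolding g_def frac_eq_iff_diff_Ints[symmetric] by (auto split: if_splits)
  obtain eps where "0 < eps"
    and eps_le: "\<And>t. t \<in> (\<lambda>(a, b). z b - z a) ` ({..n} \<times> {..n}) \<Longrightarrow> t \<notin> \<int> \<Longrightarrow>
      eps \<le> dist_to_Ints t"
    using obtain_uniform_dist_to_Ints[of "(\<lambda>(a, b). z b - z a) ` ({..n} \<times> {..n})"] by blast
  show ?thesis
  proof
    have "frac (z a0) \<noteq> frac (z b0)"
      using assms frac_eq_iff_diff_Ints[of "z b0" "z a0"] by auto
    with \<open>0 < eps\<close> show "eps * g b0 \<noteq> eps * g a0"
      by (simp add: g_def)
  next
    fix a b assume "a \<le> n" "b \<le> n"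
    show "\<bar>eps * g b - eps * g a\<bar> \<le> dist_to_Ints (z b - z a)"
    proof (cases "g b = g a")
      case True
      then show ?thesis by (simp add: dist_to_Ints_nonneg)
    next
      case False
      then have "\<bar>eps * g b - eps * g a\<bar> = eps"
        using \<open>0 < eps\<close> by (auto simp: g_def split: if_splits)
      also have "\<dots> \<le> dist_to_Ints (z b - z a)"
        using eps_le g_diff[OF False] \<open>a \<le> n\<close> \<open>b \<le> n\<close> by force
      finally show ?thesis .
    qed
  qed
qed

lemma interval_sums_perturbation:
  fixes u :: "nat \<Rightarrow> real"
  assumes "i0 < n" "u i0 \<notin> \<int>"
  obtains w where "w i0 \<noteq> 0"
    and "\<And>s a b m. \<bar>s\<bar> \<le> 1 \<Longrightarrow> a \<le> b \<Longrightarrow> b \<le> n \<Longrightarrow> m \<in> \<int> \<Longrightarrow>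
           m \<le> (\<Sum>k=a..<b. u k) \<Longrightarrow> m \<le> (\<Sum>k=a..<b. u k + s * w k)"
    and "\<And>s a b m. \<bar>s\<bar> \<le> 1 \<Longrightarrow> a \<le> b \<Longrightarrow> b \<le> n \<Longrightarrow> m \<in> \<int> \<Longrightarrow>
           (\<Sum>k=a..<b. u k) \<le> m \<Longrightarrow> (\<Sum>k=a..<b. u k + s * w k) \<le> m"
proof -
  define z where "z k = (\<Sum>i<k. u i)" for k
  have sum_u: "(\<Sum>k=a..<b. u k) = z b - z a" if "a \<le> b" for a b
    using sum_diff_nat_ivl[of 0 a b u] that by (simp add: z_def atLeast0LessThan)
  obtain h where h_ne: "h (Suc i0) \<noteq> h i0"
    and h_le: "\<And>a b. a \<le> n \<Longrightarrow> b \<le> n \<Longrightarrow> \<bar>h b - h a\<bar> \<le> dist_to_Ints (z b - z a)"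
    using level_set_perturbation[of z "Suc i0" i0 n] \<open>u i0 \<notin> \<int>\<close> sum_u[of i0 "Suc i0"] by auto
  define w where "w k = h (Suc k) - h k" for k
  show ?thesis
  proof
    show "w i0 \<noteq> 0"
      using h_ne by (simp add: w_def)
  next
    fix s m :: real and a b :: nat
    assume "\<bar>s\<bar> \<le> 1" "a \<le> b" "b \<le> n" "m \<in> \<int>"
    have sum_perturbed: "(\<Sum>k=a..<b. u k + s * w k) = (z b - z a) + s * (h b - h a)"
      using sum_Suc_diff'[OF \<open>a \<le> b\<close>, of h] sum_u[OF \<open>a \<le> b\<close>]
      by (simp add: w_def sum.distrib flip: sum_distrib_left)
    have "\<bar>s * (h b - h a)\<bar> \<le> \<bar>h b - h a\<bar>"
      using \<open>\<bar>s\<bar> \<le> 1\<close> by (simp add: abs_mult mult_left_le_one_le)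
    also have "\<dots> \<le> dist_to_Ints (z b - z a)"
      using h_le \<open>a \<le> b\<close> \<open>b \<le> n\<close> by simp
    finally have "\<bar>s * (h b - h a)\<bar> \<le> dist_to_Ints (z b - z a)" .
    with sum_perturbed sum_u[OF \<open>a \<le> b\<close>]
      Ints_lower_bound_dist_to_Ints[OF \<open>m \<in> \<int>\<close>, of "z b - z a"]
      Ints_upper_bound_dist_to_Ints[OF \<open>m \<in> \<int>\<close>, of "z b - z a"]
    show "m \<le> (\<Sum>k=a..<b. u k) \<Longrightarrow> m \<le> (\<Sum>k=a..<b. u k + s * w k)"
      and "(\<Sum>k=a..<b. u k) \<le> m \<Longrightarrow> (\<Sum>k=a..<b. u k + s * w k) \<le> m"
      by (auto simp: abs_le_iff)
  qed
qed

definition list_interval :: "'a list \<Rightarrow> nat \<Rightarrow> nat \<Rightarrow> 'a set" where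
  "list_interval L a b = (!) L ` {a..<b}"

definition list_intervals :: "'a list \<Rightarrow> 'a set set" where
  "list_intervals L = {list_interval L a b | a b. a \<le> b \<and> b \<le> length L}"

lemma sum_list_interval:
  assumes "distinct L" "b \<le> length L"
  shows "(\<Sum>j\<in>list_interval L a b. f j) = (\<Sum>k=a..<b. f (L ! k))"
  unfolding list_interval_def using assms
  by (subst sum.reindex) (auto intro!: inj_on_nth)

lemma list_intervals_append: "list_intervals L \<subseteq> list_intervals (L @ M)"
proof -
  have "list_interval L a b = list_interval (L @ M) a b" if "b \<le> length L" for a b
    unfolding list_interval_def using that by (auto simp: nth_append intro!: image_cong)
  then show ?thesis
    unfolding list_intervals_def by force
qed

lemma obtain_list_index:
  assumes "distinct L" "set L = UNIV"
  obtains pos where "\<And>j. pos j < length L" "\<And>j. L ! pos j = j"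
    "\<And>i. i < length L \<Longrightarrow> pos (L ! i) = i"
proof
  have bij: "bij_betw ((!) L) {..<length L} UNIV"
    using bij_betw_nth[OF assms(1)] assms(2) by simp
  show "inv_into {..<length L} ((!) L) j < length L" "L ! inv_into {..<length L} ((!) L) j = j"
    for j
    using bij_betw_inv_into_right[OF bij] inv_into_into[of j "(!) L" "{..<length L}"] bij
    by (auto simp: bij_betw_def)
  show "inv_into {..<length L} ((!) L) (L ! i) = i" if "i < length L" for i
    using bij that by (simp add: bij_betw_def)
qed

lemma Pbar_list_intervals_integer_bounds:
  fixes C :: "'n::finite set set" and L :: "'n list"
  assumes xy: "(x, y) \<in> Pbar C" and "y \<in> \<int>"
    and L: "distinct L" "set L = UNIV" and C: "C \<subseteq> list_intervals L"
    and lower: "\<And>a b m. a \<le> b \<Longrightarrow> b \<le> length L \<Longrightarrow> m \<in> \<int> \<Longrightarrow>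
      m \<le> (\<Sum>k=a..<b. x $ (L ! k)) \<Longrightarrow> m \<le> (\<Sum>k=a..<b. x' $ (L ! k))"
    and upper: "\<And>a b m. a \<le> b \<Longrightarrow> b \<le> length L \<Longrightarrow> m \<in> \<int> \<Longrightarrow>
      (\<Sum>k=a..<b. x $ (L ! k)) \<le> m \<Longrightarrow> (\<Sum>k=a..<b. x' $ (L ! k)) \<le> m"
  shows "(x', y) \<in> Pbar C"
proof -
  \<comment> \<open>The box constraints are integer bounds on one-element segment sums.\<close>
  have "0 \<le> x' $ j \<and> x' $ j \<le> 1" for j
  proof -
    obtain i where "i < length L" "j = L ! i"
      using L(2) by (metis UNIV_I in_set_conv_nth)
    with xy show ?thesis
      using lower[of i "Suc i" 0] upper[of i "Suc i" 1] by (auto simp: Pbar_def)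
  qed
  moreover have "y \<le> (\<Sum>j\<in>S. x' $ j)" if "S \<in> C" for S
  proof -
    obtain a b where ab: "a \<le> b" "b \<le> length L" "S = list_interval L a b"
      using C \<open>S \<in> C\<close> by (auto simp: list_intervals_def)
    with xy \<open>S \<in> C\<close> have "y \<le> (\<Sum>k=a..<b. x $ (L ! k))"
      by (auto simp: Pbar_def sum_list_interval[OF L(1)])
    with ab show ?thesis
      using lower[OF ab(1,2) \<open>y \<in> \<int>\<close>] by (simp add: sum_list_interval[OF L(1)])
  qed
  ultimately show ?thesis
    using xy by (simp add: Pbar_def)
qed

lemma Pbar_list_intervals_perturbation:
  fixes C :: "'n::finite set set" and L :: "'n list"
  assumes xy: "(x, y) \<in> Pbar C" and "y \<in> \<int>" "x $ j \<notin> \<int>"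
    and L: "distinct L" "set L = UNIV" and C: "C \<subseteq> list_intervals L"
  obtains W where "W \<noteq> 0" "\<And>s. \<bar>s\<bar> \<le> 1 \<Longrightarrow> (x + s *\<^sub>R W, y) \<in> Pbar C"
proof -
  obtain pos where pos: "\<And>j. pos j < length L" "\<And>j. L ! pos j = j"
    and pos_nth: "\<And>i. i < length L \<Longrightarrow> pos (L ! i) = i"
    using obtain_list_index[OF L] by blast
  define u where "u i = x $ (L ! i)" for i
  obtain w where w_ne: "w (pos j) \<noteq> 0"
    and lower: "\<And>s a b m. \<bar>s\<bar> \<le> 1 \<Longrightarrow> a \<le> b \<Longrightarrow> b \<le> length L \<Longrightarrow> m \<in> \<int> \<Longrightarrow>
           m \<le> (\<Sum>k=a..<b. u k) \<Longrightarrow> m \<le> (\<Sum>k=a..<b. u k + s * w k)"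
    and upper: "\<And>s a b m. \<bar>s\<bar> \<le> 1 \<Longrightarrow> a \<le> b \<Longrightarrow> b \<le> length L \<Longrightarrow> m \<in> \<int> \<Longrightarrow>
           (\<Sum>k=a..<b. u k) \<le> m \<Longrightarrow> (\<Sum>k=a..<b. u k + s * w k) \<le> m"
    using interval_sums_perturbation[of "pos j" "length L" u] pos \<open>x $ j \<notin> \<int>\<close> by (auto simp: u_def)
  define W where "W = (\<chi> j. w (pos j))"
  show ?thesis
  proof
    have "W $ j \<noteq> 0"
      using w_ne by (simp add: W_def)
    then show "W \<noteq> 0" by auto
  next
    fix s :: real assume "\<bar>s\<bar> \<le> 1"
    have "(\<Sum>k=a..<b. (x + s *\<^sub>R W) $ (L ! k)) = (\<Sum>k=a..<b. u k + s * w k)"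
      if "b \<le> length L" for a b
      using that pos_nth by (intro sum.cong) (auto simp: W_def u_def)
    with \<open>\<bar>s\<bar> \<le> 1\<close> show "(x + s *\<^sub>R W, y) \<in> Pbar C"
      by (intro Pbar_list_intervals_integer_bounds[OF xy \<open>y \<in> \<int>\<close> L C])
        (simp_all add: lower upper u_def[symmetric])
  qed
qed

lemma extreme_point_of_Pbar_fst_Ints:
  fixes C :: "'n::finite set set" and L :: "'n list"
  assumes ext: "(x, y) extreme_point_of Pbar C" and "y \<in> \<int>"
    and "distinct L" "set L = UNIV" "C \<subseteq> list_intervals L"
  shows "x $ j \<in> \<int>"
proof (rule ccontr)
  assume "x $ j \<notin> \<int>"
  moreover have "(x, y) \<in> Pbar C"
    using ext by (simp add: extreme_point_of_def)
  ultimately obtain W where "W \<noteq> 0" and perturbed: "\<And>s. \<bar>s\<bar> \<le> 1 \<Longrightarrow> (x + s *\<^sub>R W, y) \<in> Pbar C"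
    using Pbar_list_intervals_perturbation assms by metis
  have "(x, y) - (W, 0) \<in> Pbar C" "(x, y) + (W, 0) \<in> Pbar C"
    using perturbed[of "-1"] perturbed[of 1] by simp_all
  with \<open>W \<noteq> 0\<close> have "\<not> (x, y) extreme_point_of Pbar C"
    by (intro not_extreme_point_of_plus_minus[where w = "(W, 0)"]) (auto simp: zero_prod_def)
  with ext show False by blast
qed

theorem integral_polytope_Pbar_list_intervals:
  fixes C :: "'n::finite set set" and L :: "'n list"
  assumes "distinct L" "set L = UNIV" "C \<subseteq> list_intervals L"
  shows "integral_polytope (Pbar C)"
  unfolding integral_polytope_def
proof (intro allI impI conjI)
  fix v assume v: "v extreme_point_of Pbar C"
  then have "snd v \<in> \<int>"
    using extreme_point_of_Pbar_snd[OF v] by auto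
  then show "snd v \<in> \<int>" "fst v $ j \<in> \<int>" for j
    using extreme_point_of_Pbar_fst_Ints[of "fst v" "snd v" C L j] v assms by simp_all
qed

lemma unit_steps_intermediate_value:
  fixes f :: "nat \<Rightarrow> nat"
  assumes steps: "\<And>k. \<bar>int (f (Suc k)) - int (f k)\<bar> \<le> 1"
    and "k1 \<le> k2" "min (f k1) (f k2) \<le> v" "v \<le> max (f k1) (f k2)"
  obtains k where "k1 \<le> k" "k \<le> k2" "f k = v"
proof (cases "f k1 \<le> f k2")
  case True
  then show ?thesis
    using nat_intermed_int_val[of k1 k2 "\<lambda>k. int (f k)" "int v"] steps assms that by auto
next
  case False
  have "\<bar>- int (f (Suc k)) - - int (f k)\<bar> \<le> 1" for k
    using steps by (simp add: abs_minus_commute)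
  with False show ?thesis
    using nat_intermed_int_val[of k1 k2 "\<lambda>k. - int (f k)" "- int v"] assms that by auto
qed

lemma image_atLeastAtMost_unit_steps:
  fixes f :: "nat \<Rightarrow> nat"
  assumes steps: "\<And>k. \<bar>int (f (Suc k)) - int (f k)\<bar> \<le> 1" and "i \<le> j"
  obtains a b where "f ` {i..j} = {a..b}"
proof
  let ?F = "f ` {i..j}"
  have "finite ?F" "?F \<noteq> {}"
    using \<open>i \<le> j\<close> by auto
  obtain k1 where k1: "k1 \<in> {i..j}" "f k1 = Min ?F"
    using Min_in[OF \<open>finite ?F\<close> \<open>?F \<noteq> {}\<close>] by (auto simp: image_iff)
  obtain k2 where k2: "k2 \<in> {i..j}" "f k2 = Max ?F"
    using Max_in[OF \<open>finite ?F\<close> \<open>?F \<noteq> {}\<close>] by (auto simp: image_iff)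
  show "?F = {Min ?F..Max ?F}"
  proof
    show "?F \<subseteq> {Min ?F..Max ?F}"
      using \<open>finite ?F\<close> by auto
    show "{Min ?F..Max ?F} \<subseteq> ?F"
    proof
      fix v assume v: "v \<in> {Min ?F..Max ?F}"
      have bounds: "min (f (min k1 k2)) (f (max k1 k2)) \<le> v" "v \<le> max (f (min k1 k2)) (f (max k1 k2))"
        using v k1(2) k2(2) by (auto simp: min_def max_def)
      obtain k where "min k1 k2 \<le> k" "k \<le> max k1 k2" "f k = v"
        by (rule unit_steps_intermediate_value[where f = f, OF steps _ bounds]) simp
      moreover from this k1(1) k2(1) have "k \<in> {i..j}"
        by auto
      ultimately show "v \<in> ?F"
        by blast
    qed
  qed
qed

definition walk_pos :: "nat \<Rightarrow> nat \<Rightarrow> nat" where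
  "walk_pos n k = (let t = k mod (2 * n - 1) in if t < n then t else 2 * n - 2 - t)"

lemma walk_pos_less: "0 < n \<Longrightarrow> walk_pos n k < n"
  using pos_mod_bound[of "2 * n - 1" k] by (auto simp: walk_pos_def Let_def)

lemma walk_pos_Suc: "\<bar>int (walk_pos n (Suc k)) - int (walk_pos n k)\<bar> \<le> 1"
  by (cases "n = 0") (auto simp: walk_pos_def Let_def mod_Suc)

lemma nth_round_trip:
  assumes "t < 2 * length r - 1"
  shows "round_trip r ! t = r ! (if t < length r then t else 2 * length r - 2 - t)"
proof (cases "t < length r")
  case False
  then have "round_trip r ! t = rev r ! Suc (t - length r)"
    using assms by (simp add: round_trip_def nth_append nth_tl)
  also have "length r - Suc (Suc (t - length r)) = 2 * length r - 2 - t"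
    using assms False by arith
  then have "rev r ! Suc (t - length r) = r ! (2 * length r - 2 - t)"
    using assms False by (simp add: rev_nth)
  finally show ?thesis
    using False by simp
qed (simp add: round_trip_def nth_append)

lemma rep_walk_eq_nth_walk_pos:
  assumes "r \<noteq> []"
  shows "rep_walk r k = r ! walk_pos (length r) k"
proof -
  have len: "length (round_trip r) = 2 * length r - 1"
    using assms by (simp add: round_trip_def)
  have "k mod (2 * length r - 1) < 2 * length r - 1"
    using assms by (intro mod_less_divisor) (cases r, auto)
  then show ?thesis
    by (simp add: rep_walk_def len nth_round_trip walk_pos_def Let_def)
qed

lemma rep_walk_image_in_list_intervals:
  assumes "r \<noteq> []"
  shows "rep_walk r ` {i<..<j} \<in> list_intervals r"
proof (cases "Suc i \<le> j - 1")
  case False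
  then have "rep_walk r ` {i<..<j} = list_interval r 0 0"
    by (auto simp: list_interval_def)
  then show ?thesis
    unfolding list_intervals_def by blast
next
  case True
  obtain a b where ab: "walk_pos (length r) ` {Suc i..j - 1} = {a..b}"
    by (rule image_atLeastAtMost_unit_steps[where f = "walk_pos (length r)", OF walk_pos_Suc True])
  moreover have "walk_pos (length r) ` {Suc i..j - 1} \<noteq> {}"
    using True by simp
  ultimately have "a \<le> b" "b \<in> walk_pos (length r) ` {Suc i..j - 1}"
    by auto
  with \<open>r \<noteq> []\<close> have "b < length r"
    using walk_pos_less by auto
  have "{i<..<j} = {Suc i..j - 1}"
    using True by auto
  then have "rep_walk r ` {i<..<j} = (!) r ` {a..b}"
    using \<open>r \<noteq> []\<close> by (simp add: rep_walk_eq_nth_walk_pos image_image flip: ab)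
  also have "\<dots> = list_interval r a (Suc b)"
    by (simp add: list_interval_def atLeastLessThanSuc_atLeastAtMost)
  finally show ?thesis
    using \<open>a \<le> b\<close> \<open>b < length r\<close> unfolding list_intervals_def by fastforce
qed

text \<open>If no node of r is a station, take all of r; otherwise the nodes visited strictly
  between two consecutive stations that are too far apart.\<close>
lemma blocking_list_interval:
  assumes "r \<noteq> []" "\<not> rep_traversable len d r X"
  obtains I where "I \<in> list_intervals r" "I \<inter> X = {}" "\<not> rep_traversable len d r (- I)"
proof (cases "\<exists>j\<in>set r. j \<in> X")
  case False
  have "set r = list_interval r 0 (length r)"
    by (auto simp: list_interval_def set_conv_nth)
  then have "set r \<in> list_intervals r"
    unfolding list_intervals_def by blast
  with False show ?thesis
    by (intro that) (auto simp: rep_traversable_def)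
next
  case True
  with assms(2) obtain i j where ij: "i < j" "rep_walk r i \<in> X" "rep_walk r j \<in> X"
    "\<forall>k. i < k \<and> k < j \<longrightarrow> rep_walk r k \<notin> X" "\<not> (\<Sum>k=i..<j. step_len len r k) \<le> d"
    unfolding rep_traversable_def by blast
  let ?I = "rep_walk r ` {i<..<j}"
  have "?I \<inter> X = {}"
    using ij(4) by auto
  then have "rep_walk r i \<in> - ?I" "rep_walk r j \<in> - ?I"
    "\<forall>k. i < k \<and> k < j \<longrightarrow> rep_walk r k \<notin> - ?I"
    using ij(2,3) by auto
  with ij(1,5) have "\<not> rep_traversable len d r (- ?I)"
    unfolding rep_traversable_def by blast
  with \<open>?I \<inter> X = {}\<close> show ?thesis
    using rep_walk_image_in_list_intervals[OF \<open>r \<noteq> []\<close>] that by blast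
qed

lemma C_fam_singleton: "C_fam {r} D = D r"
  unfolding C_fam_def by (auto intro!: exI[of _ "\<lambda>_. S" for S])

lemma Pbar_eq_Pbar_blocking_list_intervals:
  assumes "r \<noteq> []"
    and blocking: "\<And>X. rep_traversable len d r X \<longleftrightarrow> (\<forall>S\<in>\<D>. S \<inter> X \<noteq> {})"
  shows "Pbar \<D> = Pbar {I \<in> list_intervals r. \<exists>S\<in>\<D>. S \<subseteq> I}"
proof
  show "Pbar \<D> \<subseteq> Pbar {I \<in> list_intervals r. \<exists>S\<in>\<D>. S \<subseteq> I}"
    by (rule Pbar_subset_Pbar) auto
  show "Pbar {I \<in> list_intervals r. \<exists>S\<in>\<D>. S \<subseteq> I} \<subseteq> Pbar \<D>"
  proof (rule Pbar_subset_Pbar, intro ballI)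
    fix S assume "S \<in> \<D>"
    then have "\<not> rep_traversable len d r (- S)"
      using blocking by blast
    then obtain I where I: "I \<in> list_intervals r" "I \<inter> - S = {}" "\<not> rep_traversable len d r (- I)"
      using blocking_list_interval[OF \<open>r \<noteq> []\<close>] by blast
    then obtain S' where "S' \<in> \<D>" "S' \<subseteq> I"
      using blocking by blast
    with I show "\<exists>I\<in>{I \<in> list_intervals r. \<exists>S\<in>\<D>. S \<subseteq> I}. I \<subseteq> S"
      by blast
  qed
qed

theorem proposition2:
  fixes A :: "'n::finite set set"
    and len :: "'n set \<Rightarrow> real"
    and d :: real
    and R :: "'n list set"
    and D :: "'n list \<Rightarrow> 'n set set"
    and r :: "'n list"
  assumes graph: "is_graph A"
    and len_pos: "\<forall>e\<in>A. len e > 0"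
    and d_pos: "d > 0"
    and len_le: "\<forall>e\<in>A. len e \<le> d"
    and paths: "\<forall>p\<in>R. is_path A p"
    and single: "R = {r}"
    and simple: "is_simple_path A r"
    and D_char: "\<forall>p\<in>R. \<forall>X::'n set.
                   rep_traversable len d p X \<longleftrightarrow> (\<forall>S\<in>D p. S \<inter> X \<noteq> {})"
  shows "integral_polytope (Pbar (C_fam R D))"
proof -
  from simple have "r \<noteq> []" "distinct r"
    by (auto simp: is_simple_path_def is_path_def)
  have "rep_traversable len d r X \<longleftrightarrow> (\<forall>S\<in>D r. S \<inter> X \<noteq> {})" for X
    using D_char single by simp
  with \<open>r \<noteq> []\<close> have Pbar_eq: "Pbar (C_fam R D) = Pbar {I \<in> list_intervals r. \<exists>S\<in>D r. S \<subseteq> I}"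
    unfolding single C_fam_singleton by (rule Pbar_eq_Pbar_blocking_list_intervals)
  obtain M where M: "set M = UNIV - set r" "distinct M"
    using finite_distinct_list[of "UNIV - set r"] by auto
  have "distinct (r @ M)" "set (r @ M) = UNIV"
    using M \<open>distinct r\<close> by auto
  moreover have "{I \<in> list_intervals r. \<exists>S\<in>D r. S \<subseteq> I} \<subseteq> list_intervals (r @ M)"
    using list_intervals_append by blast
  ultimately show ?thesis
    unfolding Pbar_eq by (rule integral_polytope_Pbar_list_intervals)
qed

end
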